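(* Assume the center manifold expansion hypothesis (H$_C$). Then for all $N>0$, $r>0$, $\sigma>0$ and every $i\ge -1$, $$c_i(\sigma N,\sigma^{\nu-1}r)=\frac{1}{\sigma}\,c_i(N,r).$$
   Context: Fix an integer $\nu\ge2$. For $N>0$ and $r>0$ let $w_{N,r}(\lambda)=\exp\!\big[-N\big(\tfrac{\lambda^2}{2}+\tfrac{r\lambda^{2\nu}}{2\nu}\big)\big]$ on $\mathbb R$. Let $\{\pi_n\}$ be the associated monic orthogonal polynomials, with recurrence $\lambda\pi_n=\pi_{n+1}+b_n^2\pi_{n-1}$ and $b_n^2>0$. Write $x_{n,N,r}:=b_n^2$. Hypothesis (H$_C$), the center manifold expansion: for every $N,r>0$ there are real numbers $c_i(N,r)$, $i\ge-1$, such that for every integer $m\ge-1$ there exist $K_{2,m}(N,r)>0$ and $n_1$ with $$\Big|x_{n,N,r}-\sum_{i=-1}^m c_i(N,r)\,n^{-i/\nu}\Big|<\frac{K_{2,m}(N,r)}{n^{(m+1)/\nu}}\quad\text{for all } n\ge n_1.$$ The coefficients $c_i(N,r)$ are then uniquely determined. *)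

theory Defs
  imports "HOL-Analysis.Analysis" "HOL-Computational_Algebra.Polynomial"
begin

definition wgt :: "nat \<Rightarrow> real \<Rightarrow> real \<Rightarrow> real \<Rightarrow> real" where
  "wgt \<nu> N r x = exp (- N * (x^2 / 2 + r * x^(2*\<nu>) / (2 * real \<nu>)))"

definition ip :: "nat \<Rightarrow> real \<Rightarrow> real \<Rightarrow> real poly \<Rightarrow> real poly \<Rightarrow> real" where
  "ip \<nu> N r p q = (LINT x|lborel. poly p x * poly q x * wgt \<nu> N r x)"

definition is_monic_OP :: "nat \<Rightarrow> real \<Rightarrow> real \<Rightarrow> (nat \<Rightarrow> real poly) \<Rightarrow> bool" where
  "is_monic_OP \<nu> N r \<pi> \<longleftrightarrow>
     (\<forall>n. degree (\<pi> n) = n \<and> lead_coeff (\<pi> n) = 1 \<and>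
          (\<forall>m<n. ip \<nu> N r (\<pi> n) (\<pi> m) = 0))"

definition monic_OP :: "nat \<Rightarrow> real \<Rightarrow> real \<Rightarrow> nat \<Rightarrow> real poly" where
  "monic_OP \<nu> N r = (THE \<pi>. is_monic_OP \<nu> N r \<pi>)"

text \<open>x_{n,N,r} = b_n^2, defined by lambda pi_n = pi_{n+1} + b_n^2 pi_{n-1} (n >= 1).\<close>
definition xcoef :: "nat \<Rightarrow> nat \<Rightarrow> real \<Rightarrow> real \<Rightarrow> real" where
  "xcoef \<nu> n N r = (THE b. [:0, 1:] * monic_OP \<nu> N r n
        = monic_OP \<nu> N r (Suc n) + smult b (monic_OP \<nu> N r (n - 1)))"

definition cm_expansion :: "nat \<Rightarrow> real \<Rightarrow> real \<Rightarrow> (int \<Rightarrow> real) \<Rightarrow> bool" where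
  "cm_expansion \<nu> N r c \<longleftrightarrow>
     (\<forall>m::int. m \<ge> -1 \<longrightarrow> (\<exists>K>0. \<exists>n1::nat. \<forall>n\<ge>n1.
        \<bar>xcoef \<nu> n N r - (\<Sum>i\<in>{-1..m}. c i * real n powr (- real_of_int i / real \<nu>))\<bar>
          < K / real n powr (real_of_int (m + 1) / real \<nu>)))"

definition H_C :: "nat \<Rightarrow> bool" where
  "H_C \<nu> \<longleftrightarrow> (\<forall>N>0. \<forall>r>0. \<exists>c. cm_expansion \<nu> N r c)"

definition cm_coeff :: "nat \<Rightarrow> real \<Rightarrow> real \<Rightarrow> int \<Rightarrow> real" where
  "cm_coeff \<nu> N r i = (THE a. \<exists>c. cm_expansion \<nu> N r c \<and> c i = a)"

end

theory Submission
  imports Defs "HOL-Probability.Probability"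
begin

text \<open>
  With \<open>s = sqrt \<sigma>\<close> the weight for the parameters \<open>(\<sigma>N, \<sigma>^(\<nu>-1) r)\<close> is
  \<open>\<lambda> \<mapsto> w_{N,r}(s\<lambda>)\<close>, so the substitution \<open>\<mu> = s\<lambda>\<close> shows that \<open>s^(-n) \<pi>_n(s\<lambda>)\<close> are its
  monic orthogonal polynomials, and comparing recurrences gives
  \<open>x_{n,\<sigma>N,\<sigma>^(\<nu>-1) r} = x_{n,N,r} / \<sigma>\<close>. Dividing an expansion of \<open>x_{n,N,r}\<close> by \<open>\<sigma>\<close> therefore
  yields an expansion for the new parameters, and expansion coefficients are unique because
  \<open>n^(-1/\<nu>) \<rightarrow> 0\<close>.

  The orthogonal polynomials and recurrence coefficients are defined by definite description,
  so their existence is part of the argument: the weight has finite moments and a positive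
  definite inner product, hence Gram--Schmidt yields the unique monic orthogonal family, and
  since the weight is even this family obeys a three-term recurrence without diagonal term.
\<close>

lemma wgt_pos: "wgt \<nu> N r x > 0"
  by (simp add: wgt_def)

lemma wgt_le_gaussian:
  assumes "N \<ge> 0" "r \<ge> 0"
  shows "wgt \<nu> N r x \<le> exp (- N * x^2 / 2)"
proof -
  have "0 \<le> N * (r * x^(2*\<nu>) / (2 * real \<nu>))"
    using assms by (simp add: power_mult)
  then show ?thesis
    unfolding wgt_def by (simp add: algebra_simps)
qed

lemma wgt_minus [simp]: "wgt \<nu> N r (- x) = wgt \<nu> N r x"
  by (simp add: wgt_def power_mult)

lemma wgt_dilate:
  assumes "\<nu> \<ge> 1"
  shows "wgt \<nu> (s^2 * N) ((s^2)^(\<nu>-1) * r) x = wgt \<nu> N r (s * x)"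
proof -
  obtain k where "\<nu> = Suc k"
    using assms by (cases \<nu>) auto
  then have "(s^2)^(\<nu>-1) * s^2 = s^(2*\<nu>)"
    by (simp flip: power_mult power_add)
  then have "(s*x)^(2*\<nu>) = s^2 * ((s^2)^(\<nu>-1) * x^(2*\<nu>))"
    by (simp add: power_mult_distrib algebra_simps)
  then show ?thesis
    unfolding wgt_def by (simp add: power_mult_distrib algebra_simps)
qed

lemma continuous_on_wgt: "continuous_on UNIV (wgt \<nu> N r)"
  unfolding wgt_def divide_inverse by (intro continuous_intros)

lemma integrable_gaussian_moment:
  fixes N :: real
  assumes "N > 0"
  shows "integrable lborel (\<lambda>x. \<bar>x\<bar>^k * exp (- N * x^2 / 2))"
proof -
  define sd where "sd = 1 / sqrt N"
  have "sd^2 = 1/N"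
    using assms by (simp add: sd_def power_divide)
  then have "(\<lambda>x. \<bar>x\<bar>^k * exp (- N * x^2 / 2))
      = (\<lambda>x. sqrt (2*pi * sd^2) * (normal_density 0 sd x * \<bar>x - 0\<bar>^k))"
    using assms by (simp add: normal_density_def fun_eq_iff)
  moreover have "integrable lborel (\<lambda>x. sqrt (2*pi * sd^2) * (normal_density 0 sd x * \<bar>x - 0\<bar>^k))"
    using assms by (intro integrable_mult_right integrable_normal_moment_abs) (simp add: sd_def)
  ultimately show ?thesis
    by simp
qed

lemma integrable_poly_wgt:
  assumes "N > 0" "r \<ge> 0"
  shows "integrable lborel (\<lambda>x. poly p x * wgt \<nu> N r x)"
proof (rule Bochner_Integration.integrable_bound)
  show "integrable lborel (\<lambda>x. \<Sum>k\<le>degree p. \<bar>coeff p k\<bar> * (\<bar>x\<bar>^k * exp (- N * x^2 / 2)))"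
    using assms by (intro Bochner_Integration.integrable_sum integrable_mult_right
        integrable_gaussian_moment)
  show "(\<lambda>x. poly p x * wgt \<nu> N r x) \<in> borel_measurable lborel"
    using continuous_on_wgt unfolding measurable_lborel2
    by (intro borel_measurable_continuous_onI continuous_intros)
  show "AE x in lborel. norm (poly p x * wgt \<nu> N r x)
      \<le> norm (\<Sum>k\<le>degree p. \<bar>coeff p k\<bar> * (\<bar>x\<bar>^k * exp (- N * x^2 / 2)))"
  proof (rule AE_I2)
    fix x
    have "\<bar>poly p x\<bar> \<le> (\<Sum>k\<le>degree p. \<bar>coeff p k\<bar> * \<bar>x\<bar>^k)"
      unfolding poly_altdef by (rule order_trans[OF sum_abs]) (simp add: abs_mult power_abs)
    moreover have "0 \<le> wgt \<nu> N r x" "wgt \<nu> N r x \<le> exp (- N * x^2 / 2)"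
      using wgt_pos[of \<nu> N r x] wgt_le_gaussian[of N r \<nu> x] assms by auto
    ultimately have "\<bar>poly p x\<bar> * wgt \<nu> N r x
        \<le> (\<Sum>k\<le>degree p. \<bar>coeff p k\<bar> * \<bar>x\<bar>^k) * exp (- N * x^2 / 2)"
      by (intro mult_mono) auto
    then show "norm (poly p x * wgt \<nu> N r x)
        \<le> norm (\<Sum>k\<le>degree p. \<bar>coeff p k\<bar> * (\<bar>x\<bar>^k * exp (- N * x^2 / 2)))"
      using wgt_pos[of \<nu> N r x] by (simp add: abs_mult sum_distrib_right mult.assoc sum_nonneg)
  qed
qed

lemma ip_pcompose_dilation:
  assumes "s \<noteq> 0" "\<And>x. wgt \<nu> N' r' x = wgt \<nu> N r (s * x)"
  shows "ip \<nu> N' r' (p \<circ>\<^sub>p [:0, s:]) (q \<circ>\<^sub>p [:0, s:]) = ip \<nu> N r p q / \<bar>s\<bar>"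
proof -
  define g where "g = (\<lambda>y. poly p y * poly q y * wgt \<nu> N r y)"
  have "ip \<nu> N' r' (p \<circ>\<^sub>p [:0, s:]) (q \<circ>\<^sub>p [:0, s:]) = (LINT x|lborel. g (0 + s * x))"
    unfolding ip_def g_def assms(2) by (simp add: poly_pcompose mult.commute)
  also have "\<dots> = (LINT x|lborel. g x) / \<bar>s\<bar>"
    using lborel_integral_real_affine[OF assms(1), of g 0] assms(1) by simp
  finally show ?thesis
    unfolding ip_def g_def .
qed

subsection \<open>Monic orthogonal polynomials\<close>

lemma is_monic_OP_degree: "is_monic_OP \<nu> N r \<pi> \<Longrightarrow> degree (\<pi> n) = n"
  and is_monic_OP_lead_coeff: "is_monic_OP \<nu> N r \<pi> \<Longrightarrow> lead_coeff (\<pi> n) = 1"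
  and is_monic_OP_orthogonal: "is_monic_OP \<nu> N r \<pi> \<Longrightarrow> m < n \<Longrightarrow> ip \<nu> N r (\<pi> n) (\<pi> m) = 0"
  unfolding is_monic_OP_def by blast+

lemma is_monic_OP_nonzero: "is_monic_OP \<nu> N r \<pi> \<Longrightarrow> \<pi> n \<noteq> 0"
  by (drule is_monic_OP_lead_coeff[where n = n]) auto

lemma is_monic_OP_coeff_top:
  assumes "is_monic_OP \<nu> N r \<pi>" "k \<ge> n"
  shows "coeff (\<pi> n) k = (if k = n then 1 else 0)"
  using assms is_monic_OP_degree[OF assms(1)] is_monic_OP_lead_coeff[OF assms(1)]
  by (auto intro: coeff_eq_0)

lemma monic_family_span:
  fixes \<pi> :: "nat \<Rightarrow> 'a::field poly"
  assumes "\<And>k. degree (\<pi> k) = k" "\<And>k. lead_coeff (\<pi> k) = 1" "degree q \<le> n"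
  shows "\<exists>a. q = (\<Sum>k\<le>n. smult (a k) (\<pi> k))"
  using assms(3)
proof (induction n arbitrary: q)
  case 0
  have "\<pi> 0 = [:1:]"
    using degree_0_id[OF assms(1)[of 0]] assms(2)[of 0] by (simp add: assms(1))
  moreover have "q = [:coeff q 0:]"
    using degree_0_id[of q] 0 by simp
  ultimately have "q = smult (coeff q 0) (\<pi> 0)"
    by simp
  then show ?case
    by auto
next
  case (Suc n)
  define q' where "q' = q - smult (coeff q (Suc n)) (\<pi> (Suc n))"
  have "degree q' \<le> n"
  proof (rule degree_le, intro allI impI)
    fix j assume "n < j"
    then show "coeff q' j = 0"
      using Suc.prems assms(1,2)[of "Suc n"] by (cases "j = Suc n") (auto simp: q'_def coeff_eq_0)
  qed
  then obtain a where "q' = (\<Sum>k\<le>n. smult (a k) (\<pi> k))"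
    using Suc.IH by blast
  then have "q = (\<Sum>k\<le>Suc n. smult ((a(Suc n := coeff q (Suc n))) k) (\<pi> k))"
    by (simp add: q'_def algebra_simps)
  then show ?case
    by blast
qed

lemma pcompose_dilation_monic:
  fixes p :: "'a::field poly"
  assumes "s \<noteq> 0" "degree p = n" "lead_coeff p = 1"
  shows "degree (smult (1 / s ^ n) (p \<circ>\<^sub>p [:0, s:])) = n"
    and "lead_coeff (smult (1 / s ^ n) (p \<circ>\<^sub>p [:0, s:])) = 1"
  using assms lead_coeff_comp[of "[:0, s:]" p] by (simp_all add: degree_pcompose)

locale positive_weight =
  fixes \<nu> :: nat and N r :: real
  assumes N_pos: "N > 0" and r_nonneg: "r \<ge> 0"
begin

abbreviation IP :: "real poly \<Rightarrow> real poly \<Rightarrow> real" where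
  "IP \<equiv> ip \<nu> N r"

lemma integrable_ip_integrand: "integrable lborel (\<lambda>x. poly p x * poly q x * wgt \<nu> N r x)"
  using integrable_poly_wgt[OF N_pos r_nonneg, of "p * q" \<nu>] by simp

lemma ip_add_left: "IP (p + q) u = IP p u + IP q u"
  unfolding ip_def using integrable_ip_integrand by (simp add: algebra_simps)

lemma ip_smult_left: "IP (smult c p) q = c * IP p q"
  unfolding ip_def by (simp add: mult.assoc)

lemma ip_diff_left: "IP (p - q) u = IP p u - IP q u"
  using ip_add_left[of p "- q" u] ip_smult_left[of "-1" q u] by simp

lemma ip_zero_left: "IP 0 q = 0"
  by (simp add: ip_def)

lemma ip_sum_left: "IP (\<Sum>k\<in>A. f k) q = (\<Sum>k\<in>A. IP (f k) q)"
  by (induction A rule: infinite_finite_induct) (simp_all add: ip_zero_left ip_add_left)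

lemma ip_commute: "IP p q = IP q p"
  unfolding ip_def by (simp add: ac_simps)

lemma ip_pCons_zero_left: "IP (pCons 0 p) q = IP p (pCons 0 q)"
  unfolding ip_def by (simp add: algebra_simps)

lemma ip_self_pos:
  assumes "p \<noteq> 0"
  shows "IP p p > 0"
proof -
  have nonneg: "AE x in lborel. 0 \<le> poly p x * poly p x * wgt \<nu> N r x"
    using wgt_pos[of \<nu> N r] by (intro AE_I2) (simp add: less_imp_le)
  have "IP p p \<noteq> 0"
  proof
    assume "IP p p = 0"
    then have "AE x in lborel. poly p x * poly p x * wgt \<nu> N r x = 0"
      using integral_nonneg_eq_0_iff_AE[OF integrable_ip_integrand nonneg] unfolding ip_def by simp
    moreover have "AE x in lborel. x \<notin> {x. poly p x = 0}"
      using assms by (intro AE_not_in finite_imp_null_set_lborel poly_roots_finite)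
    ultimately have "AE x in (lborel :: real measure). False"
      by eventually_elim (simp add: less_imp_neq[OF wgt_pos, THEN not_sym])
    then have "ae_filter (lborel :: real measure) = bot"
      by (simp add: trivial_limit_def)
    then show False
      by (simp add: ae_filter_eq_bot_iff)
  qed
  moreover have "IP p p \<ge> 0"
    unfolding ip_def by (rule integral_nonneg_AE[OF nonneg])
  ultimately show ?thesis
    by simp
qed

lemma is_monic_OP_orthogonal_lower_degree:
  assumes "is_monic_OP \<nu> N r \<pi>" "degree q < n"
  shows "IP (\<pi> n) q = 0"
proof -
  obtain a where a: "q = (\<Sum>k\<le>n-1. smult (a k) (\<pi> k))"
    using monic_family_span[OF is_monic_OP_degree[OF assms(1)] is_monic_OP_lead_coeff[OF assms(1)],
        of q "n-1"] assms(2) by fastforce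
  have "IP (\<pi> k) (\<pi> n) = 0" if "k < n" for k
    by (subst ip_commute) (rule is_monic_OP_orthogonal[OF assms(1) that])
  moreover have "IP (\<pi> n) q = (\<Sum>k\<le>n-1. a k * IP (\<pi> k) (\<pi> n))"
    unfolding ip_commute[of "\<pi> n"] a by (simp add: ip_sum_left ip_smult_left)
  ultimately have "IP (\<pi> n) q = (\<Sum>k\<le>n-1. a k * 0)"
    using assms(2) by (auto intro!: sum.cong)
  then show ?thesis
    by simp
qed

lemma is_monic_OP_unique:
  assumes "is_monic_OP \<nu> N r \<pi>" "is_monic_OP \<nu> N r \<pi>'"
  shows "\<pi> = \<pi>'"
proof
  fix n
  show "\<pi> n = \<pi>' n"
  proof (rule ccontr)
    define d where "d = \<pi> n - \<pi>' n"
    assume "\<pi> n \<noteq> \<pi>' n"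
    then have "d \<noteq> 0"
      by (simp add: d_def)
    moreover have "degree d < n"
      using \<open>d \<noteq> 0\<close> by (intro degree_lessI)
        (auto simp: d_def is_monic_OP_coeff_top[OF assms(1)] is_monic_OP_coeff_top[OF assms(2)])
    then have "IP d d = 0"
      unfolding d_def ip_diff_left
      by (simp add: is_monic_OP_orthogonal_lower_degree[OF assms(1)]
          is_monic_OP_orthogonal_lower_degree[OF assms(2)])
    ultimately show False
      using ip_self_pos by fastforce
  qed
qed

function gram_schmidt :: "nat \<Rightarrow> real poly" where
  "gram_schmidt n = monom 1 n
     - (\<Sum>m<n. smult (IP (monom 1 n) (gram_schmidt m) / IP (gram_schmidt m) (gram_schmidt m))
                 (gram_schmidt m))"
  by pat_completeness auto
termination by (relation "Wellfounded.measure id") auto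

declare gram_schmidt.simps [simp del]

lemma gram_schmidt_monic_orthogonal:
  "degree (gram_schmidt n) = n \<and> lead_coeff (gram_schmidt n) = 1
     \<and> (\<forall>m<n. IP (gram_schmidt n) (gram_schmidt m) = 0)"
proof (induction n rule: less_induct)
  case (less n)
  let ?G = gram_schmidt
  define c where "c m = IP (monom 1 n) (?G m) / IP (?G m) (?G m)" for m
  have top: "coeff (?G n) j = (if j = n then 1 else 0)" if "j \<ge> n" for j
  proof -
    have "coeff (?G m) j = 0" if "m < n" for m
      using less[OF that] \<open>j \<ge> n\<close> that by (intro coeff_eq_0) auto
    then show ?thesis
      by (subst gram_schmidt.simps) (simp add: coeff_sum coeff_monom)
  qed
  have "degree (?G n) \<le> n"
    using top by (intro degree_le) auto
  moreover have "n \<le> degree (?G n)"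
    using top by (intro le_degree) simp
  ultimately have deg: "degree (?G n) = n"
    by (rule antisym)
  have lead: "lead_coeff (?G n) = 1"
    using top[of n] deg by simp
  have "IP (?G n) (?G m) = 0" if "m < n" for m
  proof -
    have orth: "IP (?G m') (?G m) = 0" if "m' < n" "m' \<noteq> m" for m'
    proof (cases "m < m'")
      case True
      then show ?thesis
        using less[OF that(1)] by blast
    next
      case False
      with that(2) have "m' < m"
        by simp
      then show ?thesis
        by (subst ip_commute) (use less[OF \<open>m < n\<close>] in blast)
    qed
    have "?G m \<noteq> 0"
      using less[OF \<open>m < n\<close>] by auto
    have "IP (?G n) (?G m) = IP (monom 1 n) (?G m) - (\<Sum>m'<n. c m' * IP (?G m') (?G m))"
      unfolding gram_schmidt.simps[of n] ip_diff_left ip_sum_left ip_smult_left c_def by (rule refl)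
    also have "(\<Sum>m'<n. c m' * IP (?G m') (?G m)) = (\<Sum>m'<n. if m' = m then c m * IP (?G m) (?G m) else 0)"
      by (intro sum.cong refl) (simp add: orth)
    also have "\<dots> = c m * IP (?G m) (?G m)"
      using \<open>m < n\<close> by simp
    also have "\<dots> = IP (monom 1 n) (?G m)"
      using ip_self_pos[OF \<open>?G m \<noteq> 0\<close>] by (simp add: c_def)
    finally show ?thesis
      by simp
  qed
  with deg lead show ?case
    by blast
qed

lemma is_monic_OP_monic_OP: "is_monic_OP \<nu> N r (monic_OP \<nu> N r)"
proof -
  have gs: "is_monic_OP \<nu> N r gram_schmidt"
    using gram_schmidt_monic_orthogonal unfolding is_monic_OP_def by blast
  show ?thesis
    unfolding monic_OP_def by (rule theI[of _ gram_schmidt]) (use gs is_monic_OP_unique in auto)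
qed

lemma monic_OP_eqI: "is_monic_OP \<nu> N r \<pi> \<Longrightarrow> monic_OP \<nu> N r = \<pi>"
  using is_monic_OP_unique is_monic_OP_monic_OP by blast

end

subsection \<open>Dilation and the three-term recurrence\<close>

definition dilate_OP :: "real \<Rightarrow> (nat \<Rightarrow> real poly) \<Rightarrow> nat \<Rightarrow> real poly" where
  "dilate_OP s \<pi> n = smult (1 / s^n) (\<pi> n \<circ>\<^sub>p [:0, s:])"

lemma poly_dilate_OP: "poly (dilate_OP s \<pi> n) x = poly (\<pi> n) (s * x) / s^n"
  by (simp add: dilate_OP_def poly_pcompose mult.commute)

lemma is_monic_OP_dilate:
  assumes "s \<noteq> 0" "\<And>x. wgt \<nu> N' r' x = wgt \<nu> N r (s * x)" "is_monic_OP \<nu> N r \<pi>"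
  shows "is_monic_OP \<nu> N' r' (dilate_OP s \<pi>)"
  unfolding is_monic_OP_def
proof (intro allI conjI impI)
  fix n
  show "degree (dilate_OP s \<pi> n) = n" "lead_coeff (dilate_OP s \<pi> n) = 1"
    unfolding dilate_OP_def
    by (intro pcompose_dilation_monic assms(1) is_monic_OP_degree[OF assms(3)]
        is_monic_OP_lead_coeff[OF assms(3)])+
  fix m
  assume "m < n"
  then show "ip \<nu> N' r' (dilate_OP s \<pi> n) (dilate_OP s \<pi> m) = 0"
    unfolding dilate_OP_def ip_def
    using ip_pcompose_dilation[OF assms(1,2), of "\<pi> n" "\<pi> m"] is_monic_OP_orthogonal[OF assms(3)]
    by (simp add: ip_def mult.assoc)
qed

lemma dilate_OP_recurrence:
  assumes "s \<noteq> 0" "pCons 0 (\<pi> n) = \<pi> (Suc n) + smult b (\<pi> (n - 1))" "n = 0 \<longrightarrow> b = 0"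
  shows "pCons 0 (dilate_OP s \<pi> n) = dilate_OP s \<pi> (Suc n) + smult (b / s^2) (dilate_OP s \<pi> (n - 1))"
proof (rule poly_ext)
  fix x
  have rec: "s * x * poly (\<pi> n) (s * x) = poly (\<pi> (Suc n)) (s * x) + b * poly (\<pi> (n - 1)) (s * x)"
    using arg_cong[OF assms(2), of "\<lambda>p. poly p (s * x)"] by simp
  show "poly (pCons 0 (dilate_OP s \<pi> n)) x
      = poly (dilate_OP s \<pi> (Suc n) + smult (b / s^2) (dilate_OP s \<pi> (n - 1))) x"
  proof (cases n)
    case 0
    then show ?thesis
      using rec assms(1,3) by (simp add: poly_dilate_OP field_simps)
  next
    case (Suc k)
    have "x * poly (\<pi> n) (s * x) / s^n = (s * x * poly (\<pi> n) (s * x)) / s^Suc n"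
      using assms(1) by (simp add: field_simps)
    also have "\<dots> = poly (\<pi> (Suc n)) (s * x) / s^Suc n + b / s^2 * (poly (\<pi> k) (s * x) / s^k)"
      unfolding rec using assms(1) Suc by (simp add: field_simps power2_eq_square)
    finally show ?thesis
      using Suc by (simp add: poly_dilate_OP)
  qed
qed

context positive_weight
begin

abbreviation P :: "nat \<Rightarrow> real poly" where
  "P \<equiv> monic_OP \<nu> N r"

lemma ip_orthogonal_P:
  assumes "k \<noteq> m"
  shows "IP (P k) (P m) = 0"
proof (cases "m < k")
  case True
  then show ?thesis
    by (rule is_monic_OP_orthogonal[OF is_monic_OP_monic_OP])
next
  case False
  with assms have "k < m"
    by simp
  then show ?thesis
    by (subst ip_commute) (rule is_monic_OP_orthogonal[OF is_monic_OP_monic_OP])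
qed

text \<open>Reflection \<open>\<lambda> \<mapsto> -\<lambda>\<close> preserves the even weight, so uniqueness forces
  \<open>P_n(-\<lambda>) = (-1)^n P_n(\<lambda>)\<close>.\<close>

lemma poly_P_minus: "poly (P n) (- x) = (-1)^n * poly (P n) x"
proof -
  have "is_monic_OP \<nu> N r (dilate_OP (-1) P)"
    by (rule is_monic_OP_dilate[OF _ _ is_monic_OP_monic_OP]) simp_all
  then have "dilate_OP (-1) P = P"
    by (rule monic_OP_eqI[symmetric])
  then have "poly (P n) (-1 * x) / (-1)^n = poly (P n) x"
    by (metis poly_dilate_OP)
  then show ?thesis
    by (simp add: divide_eq_eq mult.commute)
qed

lemma ip_pCons_zero_P_self: "IP (pCons 0 (P n)) (P n) = 0"
proof -
  define g where "g x = x * poly (P n) x * poly (P n) x * wgt \<nu> N r x" for x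
  have odd: "g (0 + -1 * x) = - g x" for x
    unfolding g_def using poly_P_minus[of n x] by (simp add: algebra_simps)
  have "(LINT x|lborel. g x) = (LINT x|lborel. g (0 + -1 * x))"
    using lborel_integral_real_affine[of "-1" g 0] by simp
  also have "\<dots> = - (LINT x|lborel. g x)"
    by (simp only: odd integral_minus)
  finally show ?thesis
    unfolding ip_def g_def by simp
qed

lemma ip_pCons_zero_P:
  assumes "k \<le> n" "Suc k \<noteq> n"
  shows "IP (pCons 0 (P n)) (P k) = 0"
proof (cases "k = n")
  case True
  then show ?thesis
    using ip_pCons_zero_P_self by simp
next
  case False
  then have "degree (pCons 0 (P k)) < n"
    using assms is_monic_OP_degree[OF is_monic_OP_monic_OP, of k]
      is_monic_OP_nonzero[OF is_monic_OP_monic_OP, of k] by simp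
  then show ?thesis
    unfolding ip_pCons_zero_left
    by (rule is_monic_OP_orthogonal_lower_degree[OF is_monic_OP_monic_OP])
qed

lemma orthogonal_to_P_imp_zero:
  assumes "degree d \<le> n" "\<And>k. k \<le> n \<Longrightarrow> IP d (P k) = 0"
  shows "d = 0"
proof (rule ccontr)
  assume "d \<noteq> 0"
  obtain a where a: "d = (\<Sum>k\<le>n. smult (a k) (P k))"
    using monic_family_span[OF is_monic_OP_degree is_monic_OP_lead_coeff, OF is_monic_OP_monic_OP
        is_monic_OP_monic_OP assms(1)] by blast
  from a have "IP d d = IP (\<Sum>k\<le>n. smult (a k) (P k)) d"
    by simp
  also have "\<dots> = (\<Sum>k\<le>n. a k * IP (P k) d)"
    by (simp add: ip_sum_left ip_smult_left)
  also have "\<dots> = 0"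
    using assms(2) by (intro sum.neutral ballI) (metis atMost_iff ip_commute mult_zero_right)
  finally show False
    using ip_self_pos[OF \<open>d \<noteq> 0\<close>] by simp
qed

lemma P_three_term_recurrence:
  obtains b where "pCons 0 (P n) = P (Suc n) + smult b (P (n - 1))" "n = 0 \<longrightarrow> b = 0"
proof -
  define q where "q = pCons 0 (P n) - P (Suc n)"
  define b where "b = (if n = 0 then 0 else IP q (P (n - 1)) / IP (P (n - 1)) (P (n - 1)))"
  have "q - smult b (P (n - 1)) = 0"
  proof (rule orthogonal_to_P_imp_zero)
    have "degree q \<le> n"
      unfolding q_def
    proof (intro degree_le allI impI)
      fix j
      assume "n < j"
      then obtain i where "j = Suc i" "n \<le> i"
        by (cases j) auto
      then show "coeff (pCons 0 (P n) - P (Suc n)) j = 0"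
        by (simp add: is_monic_OP_coeff_top[OF is_monic_OP_monic_OP])
    qed
    moreover have "degree (smult b (P (n - 1))) \<le> n"
      using degree_smult_le[of b "P (n - 1)"] is_monic_OP_degree[OF is_monic_OP_monic_OP, of "n - 1"]
      by linarith
    ultimately show "degree (q - smult b (P (n - 1))) \<le> n"
      by (rule degree_diff_le)
    fix k
    assume "k \<le> n"
    show "IP (q - smult b (P (n - 1))) (P k) = 0"
    proof (cases "Suc k = n")
      case True
      then have k: "n - 1 = k" "n \<noteq> 0"
        by auto
      have "b * IP (P k) (P k) = IP q (P k)"
        using ip_self_pos[OF is_monic_OP_nonzero[OF is_monic_OP_monic_OP, of k]] k
        by (simp add: b_def)
      then show ?thesis
        using k by (simp add: ip_diff_left ip_smult_left)
    next
      case False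
      have "IP q (P k) = 0"
        using ip_pCons_zero_P[OF \<open>k \<le> n\<close> False] ip_orthogonal_P[of "Suc n" k] \<open>k \<le> n\<close>
        by (simp add: q_def ip_diff_left)
      moreover have "b * IP (P (n - 1)) (P k) = 0"
        using False ip_orthogonal_P[of "n - 1" k] by (cases "n = 0") (auto simp: b_def)
      ultimately show ?thesis
        by (simp add: ip_diff_left ip_smult_left)
    qed
  qed
  then show ?thesis
    by (intro that[of b]) (simp_all add: q_def b_def algebra_simps)
qed

lemma xcoef_eqI:
  assumes "pCons 0 (P n) = P (Suc n) + smult b (P (n - 1))"
  shows "xcoef \<nu> n N r = b"
  unfolding xcoef_def
proof (rule the_equality)
  show "[:0, 1:] * P n = P (Suc n) + smult b (P (n - 1))"
    using assms by simp
  fix b'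
  assume "[:0, 1:] * P n = P (Suc n) + smult b' (P (n - 1))"
  then have "smult (b' - b) (P (n - 1)) = 0"
    using assms by (simp add: smult_diff_left)
  then show "b' = b"
    using is_monic_OP_nonzero[OF is_monic_OP_monic_OP] by simp
qed

end

lemma xcoef_scale:
  assumes "\<nu> \<ge> 1" "N > 0" "r \<ge> 0" "\<sigma> > 0"
  shows "xcoef \<nu> n (\<sigma> * N) (\<sigma>^(\<nu>-1) * r) = xcoef \<nu> n N r / \<sigma>"
proof -
  interpret W: positive_weight \<nu> N r
    using assms by unfold_locales
  interpret W': positive_weight \<nu> "\<sigma> * N" "\<sigma>^(\<nu>-1) * r"
    using assms by unfold_locales auto
  define s where "s = sqrt \<sigma>"
  have s: "s^2 = \<sigma>" "s \<noteq> 0"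
    using assms by (auto simp: s_def)
  obtain b where b: "pCons 0 (W.P n) = W.P (Suc n) + smult b (W.P (n - 1))" "n = 0 \<longrightarrow> b = 0"
    by (rule W.P_three_term_recurrence)
  have "is_monic_OP \<nu> (\<sigma> * N) (\<sigma>^(\<nu>-1) * r) (dilate_OP s W.P)"
    using is_monic_OP_dilate[OF s(2) wgt_dilate[OF assms(1)] W.is_monic_OP_monic_OP] by (simp add: s)
  then have "W'.P = dilate_OP s W.P"
    by (rule W'.monic_OP_eqI)
  then have "xcoef \<nu> n (\<sigma> * N) (\<sigma>^(\<nu>-1) * r) = b / \<sigma>"
    using W'.xcoef_eqI dilate_OP_recurrence[OF s(2) b] by (simp add: s)
  then show ?thesis
    using W.xcoef_eqI[OF b(1)] by simp
qed

subsection \<open>Center manifold expansions\<close>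

lemma cm_expansion_divide:
  assumes "\<sigma> > 0" "\<And>n. xcoef \<nu> n N' r' = xcoef \<nu> n N r / \<sigma>" "cm_expansion \<nu> N r c"
  shows "cm_expansion \<nu> N' r' (\<lambda>i. c i / \<sigma>)"
  unfolding cm_expansion_def
proof (intro allI impI)
  fix m :: int
  let ?S = "\<lambda>c n. \<Sum>i\<in>{-1..m}. c i * real n powr (- real_of_int i / real \<nu>)"
  let ?R = "\<lambda>n. real n powr (real_of_int (m + 1) / real \<nu>)"
  assume "m \<ge> -1"
  then obtain K n1 where "K > 0" and K: "\<And>n. n \<ge> n1 \<Longrightarrow> \<bar>xcoef \<nu> n N r - ?S c n\<bar> < K / ?R n"
    using assms(3) unfolding cm_expansion_def by blast
  have "\<bar>xcoef \<nu> n N' r' - ?S (\<lambda>i. c i / \<sigma>) n\<bar> < K / \<sigma> / ?R n" if "n \<ge> n1" for n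
  proof -
    have "xcoef \<nu> n N' r' - ?S (\<lambda>i. c i / \<sigma>) n = (xcoef \<nu> n N r - ?S c n) / \<sigma>"
      by (simp add: assms(2) diff_divide_distrib sum_divide_distrib)
    then have "\<bar>xcoef \<nu> n N' r' - ?S (\<lambda>i. c i / \<sigma>) n\<bar> = \<bar>xcoef \<nu> n N r - ?S c n\<bar> / \<sigma>"
      using assms(1) by simp
    also have "\<dots> < K / ?R n / \<sigma>"
      using K[OF that] assms(1) by (rule divide_strict_right_mono)
    finally show ?thesis
      by (simp add: mult.commute)
  qed
  then show "\<exists>K>0. \<exists>n1. \<forall>n\<ge>n1. \<bar>xcoef \<nu> n N' r' - ?S (\<lambda>i. c i / \<sigma>) n\<bar> < K / ?R n"
    using \<open>K > 0\<close> assms(1) by (intro exI[of _ "K / \<sigma>"]) auto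
qed

lemma eq_0_if_eventually_less_powr:
  fixes a K e :: real
  assumes "e > 0" "\<forall>\<^sub>F n in sequentially. \<bar>a\<bar> < K * real n powr (- e)"
  shows "a = 0"
proof (rule ccontr)
  assume "a \<noteq> 0"
  have "((\<lambda>n. K * real n powr (- e)) \<longlongrightarrow> 0) sequentially"
    using assms(1) by (intro tendsto_mult_right_zero tendsto_neg_powr filterlim_real_sequentially) auto
  then have "\<forall>\<^sub>F n in sequentially. K * real n powr (- e) < \<bar>a\<bar>"
    using \<open>a \<noteq> 0\<close> by (intro order_tendstoD) auto
  with assms(2) have "\<forall>\<^sub>F n in sequentially. False"
    by eventually_elim simp
  then show False
    by simp
qed

text \<open>Once the coefficients below \<open>j\<close> agree, the two truncations at \<open>j\<close> differ by the single term
  \<open>(c j - c' j) n^(-j/\<nu>)\<close>, which the two error bounds make \<open>O(n^(-(j+1)/\<nu>))\<close>.\<close>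

lemma cm_expansion_next_coeff_eq:
  assumes "\<nu> \<ge> 1" "cm_expansion \<nu> N r c" "cm_expansion \<nu> N r c'" "j \<ge> -1"
    and lower: "\<And>i. -1 \<le> i \<Longrightarrow> i < j \<Longrightarrow> c i = c' i"
  shows "c j = c' j"
proof -
  let ?S = "\<lambda>c n. \<Sum>i\<in>{-1..j}. c i * real n powr (- real_of_int i / real \<nu>)"
  obtain K1 n1 where K1: "\<And>n. n \<ge> n1 \<Longrightarrow> \<bar>xcoef \<nu> n N r - ?S c n\<bar>
      < K1 / real n powr (real_of_int (j + 1) / real \<nu>)"
    using assms(2,4) unfolding cm_expansion_def by blast
  obtain K2 n2 where K2: "\<And>n. n \<ge> n2 \<Longrightarrow> \<bar>xcoef \<nu> n N r - ?S c' n\<bar>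
      < K2 / real n powr (real_of_int (j + 1) / real \<nu>)"
    using assms(3,4) unfolding cm_expansion_def by blast
  have "\<bar>c j - c' j\<bar> < (K1 + K2) * real n powr (- (1 / real \<nu>))" if n: "n \<ge> max 1 (max n1 n2)" for n
  proof -
    have "?S c n - ?S c' n = (\<Sum>i\<in>{-1..j}. (c i - c' i) * real n powr (- real_of_int i / real \<nu>))"
      by (simp add: sum_subtractf[symmetric] algebra_simps)
    also have "\<dots> = (c j - c' j) * real n powr (- real_of_int j / real \<nu>)"
      using assms(4) lower by (subst sum.remove[of _ j]) (auto intro!: sum.neutral)
    finally have diff: "?S c n - ?S c' n = (c j - c' j) * real n powr (- real_of_int j / real \<nu>)" .
    have "\<bar>(c j - c' j) * real n powr (- real_of_int j / real \<nu>)\<bar>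
        < (K1 + K2) / real n powr (real_of_int (j + 1) / real \<nu>)"
      using K1[of n] K2[of n] n unfolding diff[symmetric]
      by (simp add: add_divide_distrib abs_diff_less_iff)
    also have "\<dots> = (K1 + K2) * real n powr (- (1 / real \<nu>)) * real n powr (- real_of_int j / real \<nu>)"
      using assms(1) by (simp add: powr_minus_divide mult.assoc flip: powr_add) (simp add: field_simps)
    finally show ?thesis
      using n by (simp add: abs_mult)
  qed
  then have "\<forall>\<^sub>F n in sequentially. \<bar>c j - c' j\<bar> < (K1 + K2) * real n powr (- (1 / real \<nu>))"
    unfolding eventually_sequentially by blast
  then have "c j - c' j = 0"
    by (rule eq_0_if_eventually_less_powr[rotated]) (use assms(1) in simp)
  then show ?thesis
    by simp
qed

lemma cm_expansion_unique:
  assumes "\<nu> \<ge> 1" "cm_expansion \<nu> N r c" "cm_expansion \<nu> N r c'" "i \<ge> -1"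
  shows "c i = c' i"
proof -
  have "c (int k - 1) = c' (int k - 1)" for k
  proof (induction k rule: less_induct)
    case (less k)
    show ?case
    proof (rule cm_expansion_next_coeff_eq[OF assms(1-3)])
      fix i
      assume i: "-1 \<le> i" "i < int k - 1"
      then have "nat (i + 1) < k"
        by (simp add: nat_less_iff)
      from less[OF this] show "c i = c' i"
        using i by simp
    qed simp
  qed
  from this[of "nat (i + 1)"] show ?thesis
    using assms(4) by simp
qed

lemma cm_coeff_eqI:
  assumes "\<nu> \<ge> 1" "cm_expansion \<nu> N r c" "i \<ge> -1"
  shows "cm_coeff \<nu> N r i = c i"
  unfolding cm_coeff_def
  using assms cm_expansion_unique[OF assms(1) assms(2) _ assms(3)] by (intro the_equality) metis+

theorem lemmaB1:
  fixes \<nu> :: nat and N r \<sigma> :: real and i :: int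
  assumes "\<nu> \<ge> 2"
    and "H_C \<nu>"
    and "N > 0" and "r > 0" and "\<sigma> > 0" and "i \<ge> -1"
  shows "cm_coeff \<nu> (\<sigma> * N) (\<sigma> ^ (\<nu> - 1) * r) i = cm_coeff \<nu> N r i / \<sigma>"
proof -
  have "\<nu> \<ge> 1"
    using assms(1) by simp
  obtain c where c: "cm_expansion \<nu> N r c"
    using assms(2-4) unfolding H_C_def by blast
  have "cm_expansion \<nu> (\<sigma> * N) (\<sigma> ^ (\<nu> - 1) * r) (\<lambda>i. c i / \<sigma>)"
    using xcoef_scale[OF \<open>\<nu> \<ge> 1\<close> assms(3) _ assms(5)] assms(4)
    by (intro cm_expansion_divide[OF assms(5) _ c]) simp
  then show ?thesis
    using cm_coeff_eqI[OF \<open>\<nu> \<ge> 1\<close> _ assms(6)] cm_coeff_eqI[OF \<open>\<nu> \<ge> 1\<close> c assms(6)] by simp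
qed

end
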